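(* Let $(\mathcal{R},\mu)$ be non-atomic with $\mu(\mathcal{R})=\infty$, let $\|\cdot\|_X$ be an r.i. quasi-Banach function norm on $\mathcal{M}(\mathcal{R},\mu)$ with fundamental function $\varphi_X$, and let $m_{\varphi_X}$ be the corresponding weak Marcinkiewicz space. Then $$(m_{\varphi_X})_a=\Big\{f\in m_{\varphi_X};\ \lim_{t\to0^+}\varphi_X(t)f^*(t)=\lim_{t\to\infty}\varphi_X(t)f^*(t)=0\Big\}.$$ In particular, $(m_{\varphi_X})_a\neq m_{\varphi_X}$, i.e. $m_{\varphi_X}$ does not have absolutely continuous quasinorm.
   Context: Let $(\mathcal{R},\mu)$ be a $\sigma$-finite measure space; $\mathcal{M}$ denotes the $\mu$-measurable extended complex-valued functions (identified a.e.), $\mathcal{M}_+$ the non-negative ones. $f_*(s)=\mu(\{|f|>s\})$, $f^*(t)=\inf\{s\ge0;\,f_*(s)\le t\}$ (non-increasing rearrangement). A quasi-Banach function norm is a map $\|\cdot\|:\mathcal{M}\to[0,\infty]$ with $\|f\|=\||f|\|$ such that on $\mathcal{M}_+$: (Q1) $\|af\|=|a|\|f\|$, $\|f\|=0\iff f=0$ a.e., and there is $C\ge1$ (modulus of concavity) with $\|f+g\|\le C(\|f\|+\|g\|)$; (P2) $f\le g$ a.e. implies $\|f\|\le\|g\|$; (P3) $f_n\uparrow f$ a.e. implies $\|f_n\|\uparrow\|f\|$; (P4) $\|\chi_E\|<\infty$ whenever $\mu(E)<\infty$. The norm is rearrangement-invariant (r.i.) if $\|f\|=\|g\|$ whenever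 $f^*=g^*$. The corresponding space is $X=\{f\in\mathcal{M};\,\|f\|_X<\infty\}$. A function $f\in X$ has absolutely continuous quasinorm if $\|f\chi_{E_k}\|_X\to0$ for every sequence of measurable sets $E_k$ with $\chi_{E_k}\to0$ $\mu$-a.e.; $X_a$ denotes the set of such functions. The fundamental function of $X$ is $\varphi_X(t)=\|\chi_{E_t}\|_X$ for $t\in[0,\infty)$, where $E_t\subseteq\mathcal{R}$ is any measurable set with $\mu(E_t)=t$. The weak Marcinkiewicz space $m_{\varphi_X}$ is the r.i. quasi-Banach function space given by the functional $\|f\|_{m_{\varphi_X}}=\sup_{t\in[0,\infty)}\varphi_X(t)f^*(t)$. *)

theory Defs
  imports "HOL-Analysis.Analysis"
begin

definition nonatomic :: "'a measure \<Rightarrow> bool" where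
  "nonatomic M \<longleftrightarrow> (\<forall>A\<in>sets M. 0 < emeasure M A \<longrightarrow>
     (\<exists>B\<in>sets M. B \<subseteq> A \<and> 0 < emeasure M B \<and> emeasure M B < emeasure M A))"

text \<open>Distribution function of a non-negative (extended) function g (g plays the role of |f|).\<close>
definition distf :: "'a measure \<Rightarrow> ('a \<Rightarrow> ennreal) \<Rightarrow> ennreal \<Rightarrow> ennreal" where
  "distf M g s = emeasure M {x \<in> space M. s < g x}"

definition rearr :: "'a measure \<Rightarrow> ('a \<Rightarrow> ennreal) \<Rightarrow> real \<Rightarrow> ennreal" where
  "rearr M g t = Inf {s. distf M g s \<le> ennreal t}"

definition modf :: "('a \<Rightarrow> complex) \<Rightarrow> 'a \<Rightarrow> ennreal" where
  "modf f = (\<lambda>x. ennreal (cmod (f x)))"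

text \<open>Quasi-Banach function norm, given by its values on non-negative measurable
  functions (the norm of f in M is that of |f|).\<close>
definition qbfn :: "'a measure \<Rightarrow> (('a \<Rightarrow> ennreal) \<Rightarrow> ennreal) \<Rightarrow> bool" where
  "qbfn M N \<longleftrightarrow>
    (\<forall>f\<in>borel_measurable M. \<forall>a::real. a \<ge> 0 \<longrightarrow> N (\<lambda>x. ennreal a * f x) = ennreal a * N f)
  \<and> (\<forall>f\<in>borel_measurable M. N f = 0 \<longleftrightarrow> (AE x in M. f x = 0))
  \<and> (\<exists>C::real. C \<ge> 1 \<and> (\<forall>f\<in>borel_measurable M. \<forall>g\<in>borel_measurable M.
        N (\<lambda>x. f x + g x) \<le> ennreal C * (N f + N g)))
  \<and> (\<forall>f\<in>borel_measurable M. \<forall>g\<in>borel_measurable M. (AE x in M. f x \<le> g x) \<longrightarrow> N f \<le> N g)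
  \<and> (\<forall>F f. (\<forall>n. F n \<in> borel_measurable M) \<longrightarrow> f \<in> borel_measurable M \<longrightarrow>
        (AE x in M. incseq (\<lambda>n. F n x) \<and> (\<lambda>n. F n x) \<longlonglongrightarrow> f x) \<longrightarrow>
        incseq (\<lambda>n. N (F n)) \<and> (\<lambda>n. N (F n)) \<longlonglongrightarrow> N f)
  \<and> (\<forall>E\<in>sets M. emeasure M E < \<infinity> \<longrightarrow> N (indicator E) < \<infinity>)"

definition rinv :: "'a measure \<Rightarrow> (('a \<Rightarrow> ennreal) \<Rightarrow> ennreal) \<Rightarrow> bool" where
  "rinv M N \<longleftrightarrow> (\<forall>f\<in>borel_measurable M. \<forall>g\<in>borel_measurable M.
      (\<forall>t\<ge>0. rearr M f t = rearr M g t) \<longrightarrow> N f = N g)"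

text \<open>Fundamental function: norm of the indicator of some set of measure t
  (well defined for r.i. norms on non-atomic spaces with infinite measure).\<close>
definition fundf :: "'a measure \<Rightarrow> (('a \<Rightarrow> ennreal) \<Rightarrow> ennreal) \<Rightarrow> real \<Rightarrow> ennreal" where
  "fundf M N t = N (indicator (SOME E. E \<in> sets M \<and> emeasure M E = ennreal t))"

definition marc :: "'a measure \<Rightarrow> (('a \<Rightarrow> ennreal) \<Rightarrow> ennreal) \<Rightarrow> ('a \<Rightarrow> ennreal) \<Rightarrow> ennreal" where
  "marc M N g = (SUP t\<in>{0::real..}. fundf M N t * rearr M g t)"

definition fspace :: "'a measure \<Rightarrow> (('a \<Rightarrow> ennreal) \<Rightarrow> ennreal) \<Rightarrow> ('a \<Rightarrow> complex) set" where
  "fspace M N = {f\<in>borel_measurable M. N (modf f) < \<infinity>}"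

definition acpart :: "'a measure \<Rightarrow> (('a \<Rightarrow> ennreal) \<Rightarrow> ennreal) \<Rightarrow> ('a \<Rightarrow> complex) set" where
  "acpart M N = {f\<in>fspace M N. \<forall>E::nat \<Rightarrow> 'a set. (\<forall>k. E k \<in> sets M) \<longrightarrow>
      (AE x in M. (\<lambda>k. indicator (E k) x :: real) \<longlonglongrightarrow> 0) \<longrightarrow>
      (\<lambda>k. N (\<lambda>x. modf f x * indicator (E k) x)) \<longlonglongrightarrow> 0}"

end

theory Submission
  imports Defs
begin

text \<open>
  Write \<open>\<Phi>\<^sub>f(t) = \<phi>(t) f\<^sup>*(t)\<close>, so that the quasinorm of \<open>m\<^sub>\<phi>\<close> is the supremum of
  \<open>\<Phi>\<^sub>f\<close>. The fundamental function \<open>\<phi>\<close> is increasing and doubling, \<open>\<phi>(2t) \<le> 2C \<phi>(t)\<close>,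
  by the quasi-triangle inequality on a set of measure \<open>2t\<close> split into two halves. By
  doubling, if \<open>g\<close> agrees with \<open>|f|\<close> on a set of measure \<open>t\<close> where \<open>|f| > \<sigma>\<close>, then
  \<open>\<phi>(t) \<sigma> \<le> 2C \<parallel>g\<parallel>\<close>. Hence absolute continuity of \<open>f\<close> forces \<open>\<Phi>\<^sub>f \<rightarrow> 0\<close> at \<open>0\<close>
  (restrict \<open>f\<close> to sets of small measure; Borel-Cantelli makes absolute continuity uniform
  in the measure of the set) and at \<open>\<infinity>\<close> (restrict \<open>f\<close> to the complements of an exhausting
  sequence of sets of finite measure). Conversely, if \<open>\<Phi>\<^sub>f\<close> vanishes at both ends, then
  \<open>\<Phi>\<close> of a restriction \<open>f \<chi>\<^sub>E\<close> is small near \<open>0\<close> and near \<open>\<infinity>\<close>, and in between it is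
  bounded by \<open>\<phi>(T) s\<close> as soon as \<open>\<mu>({|f| > s} \<inter> E)\<close> is small, which eventually holds by
  dominated convergence. Finally, a non-atomic space of infinite measure contains nested sets
  \<open>G\<^sub>n\<close> of measure \<open>2\<^sup>n\<close>, and the step function \<open>sup\<^sub>n \<chi>\<^bsub>G\<^sub>n\<^esub> / \<phi>(2\<^sup>n)\<close> satisfies
  \<open>\<Phi> \<le> 1\<close> everywhere but \<open>\<Phi>(2\<^sup>n) \<ge> 1/(2C)\<close>: it lies in \<open>m\<^sub>\<phi>\<close> but not in its absolutely
  continuous part.
\<close>

section \<open>Non-atomic and sigma-finite measures\<close>

lemma nonatomic_half_subset:
  assumes "nonatomic M" and B: "B \<in> sets M" "0 < measure M B" "emeasure M B < \<infinity>"
  obtains B' where "B' \<in> sets M" "B' \<subseteq> B" "0 < measure M B'" "measure M B' \<le> measure M B / 2"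
proof -
  have "0 < emeasure M B"
    using B by (simp add: emeasure_eq_ennreal_measure)
  then obtain D where D: "D \<in> sets M" "D \<subseteq> B" "0 < emeasure M D" "emeasure M D < emeasure M B"
    using assms(1) B(1) unfolding nonatomic_def by blast
  have "emeasure M D < \<infinity>"
    using D(4) B(3) by simp
  then have "0 < measure M D" "measure M D < measure M B"
    using D(3,4) B(3) by (simp_all add: emeasure_eq_ennreal_measure ennreal_less_iff)
  moreover have "measure M (B - D) = measure M B - measure M D"
    using B D by (intro measure_Diff) auto
  ultimately show ?thesis
  proof (cases "measure M D \<le> measure M B / 2")
    case True
    with \<open>0 < measure M D\<close> D(1,2) show ?thesis by (intro that[of D])
  next
    case False
    with \<open>measure M (B - D) = _\<close> \<open>measure M D < measure M B\<close>
    have "0 < measure M (B - D)" "measure M (B - D) \<le> measure M B / 2"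
      by linarith+
    with B(1) D(1) show ?thesis
      by (intro that[of "B - D"]) auto
  qed
qed

lemma nonatomic_small_subset:
  assumes na: "nonatomic M" and A: "A \<in> sets M" "0 < measure M A" "emeasure M A < \<infinity>"
    and e: "0 < e"
  obtains B where "B \<in> sets M" "B \<subseteq> A" "0 < measure M B" "measure M B \<le> e"
proof -
  have halving: "\<exists>B\<in>sets M. B \<subseteq> A \<and> 0 < measure M B \<and> measure M B \<le> measure M A / 2 ^ n" for n
  proof (induction n)
    case 0
    show ?case
      using A by (intro bexI[of _ A]) auto
  next
    case (Suc n)
    then obtain B where B: "B \<in> sets M" "B \<subseteq> A" "0 < measure M B" "measure M B \<le> measure M A / 2 ^ n"
      by blast
    have "emeasure M B < \<infinity>"
      using emeasure_mono[OF B(2) A(1)] A(3) by simp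
    then obtain B' where "B' \<in> sets M" "B' \<subseteq> B" "0 < measure M B'" "measure M B' \<le> measure M B / 2"
      using nonatomic_half_subset[OF na B(1,3)] by blast
    with B(2,4) show ?case
      by (intro bexI[of _ B']) auto
  qed
  obtain n where "measure M A / e < 2 ^ n"
    using real_arch_pow[of 2] by auto
  then have "measure M A / 2 ^ n \<le> e"
    using e by (simp add: field_simps)
  with halving[of n] show ?thesis
    using that by force
qed

lemma nearly_maximal_subset:
  assumes "A \<in> sets M" "0 \<le> r"
  obtains C where "C \<in> sets M" "C \<subseteq> A" "measure M C \<le> r"
    "\<And>D. D \<in> sets M \<Longrightarrow> D \<subseteq> A \<Longrightarrow> measure M D \<le> r \<Longrightarrow> measure M D / 2 \<le> measure M C"
proof -
  define S where "S = Sup (measure M ` {D \<in> sets M. D \<subseteq> A \<and> measure M D \<le> r})"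
  have bdd: "bdd_above (measure M ` {D \<in> sets M. D \<subseteq> A \<and> measure M D \<le> r})"
    by (rule bdd_aboveI[of _ r]) auto
  have le_S: "measure M D \<le> S" if "D \<in> sets M" "D \<subseteq> A" "measure M D \<le> r" for D
    unfolding S_def using that by (intro cSup_upper[OF _ bdd]) auto
  show ?thesis
  proof (cases "S \<le> 0")
    case True
    then have "measure M D / 2 \<le> measure M {}" if "D \<in> sets M" "D \<subseteq> A" "measure M D \<le> r" for D
      using le_S[OF that] by simp
    then show ?thesis
      using assms(2) by (intro that[of "{}"]) auto
  next
    case False
    then have "S / 2 < S"
      by simp
    moreover have "{} \<in> {D \<in> sets M. D \<subseteq> A \<and> measure M D \<le> r}"
      using assms(2) by simp
    ultimately have "\<exists>x\<in>measure M ` {D \<in> sets M. D \<subseteq> A \<and> measure M D \<le> r}. S / 2 < x"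
      unfolding S_def by (subst (asm) less_cSup_iff[OF _ bdd]) auto
    then obtain C where C: "C \<in> sets M" "C \<subseteq> A" "measure M C \<le> r" "S / 2 < measure M C"
      by blast
    have "measure M D / 2 \<le> measure M C" if "D \<in> sets M" "D \<subseteq> A" "measure M D \<le> r" for D
      using le_S[OF that] C(4) by linarith
    then show ?thesis
      by (rule that[OF C(1-3)])
  qed
qed

lemma greedy_incseq_subsets:
  assumes A: "A \<in> sets M" "emeasure M A < \<infinity>" and t: "0 \<le> t"
  obtains Bs where "\<And>n. Bs n \<in> sets M" "\<And>n. Bs n \<subseteq> A" "\<And>n. measure M (Bs n) \<le> t" "incseq Bs"
    "\<And>n D. D \<in> sets M \<Longrightarrow> D \<subseteq> A - Bs n \<Longrightarrow> measure M D \<le> t - measure M (Bs n) \<Longrightarrow>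
      measure M D / 2 \<le> measure M (Bs (Suc n)) - measure M (Bs n)"
proof -
  define P where "P n B \<longleftrightarrow> B \<in> sets M \<and> B \<subseteq> A \<and> measure M B \<le> t" for n :: nat and B
  define Q where "Q n B B' \<longleftrightarrow> B \<subseteq> B' \<and> (\<forall>D\<in>sets M. D \<subseteq> A - B \<longrightarrow> measure M D \<le> t - measure M B
      \<longrightarrow> measure M D / 2 \<le> measure M B' - measure M B)" for n :: nat and B B'
  have "\<exists>Bs. \<forall>n. P n (Bs n) \<and> Q n (Bs n) (Bs (Suc n))"
  proof (rule dependent_nat_choice)
    show "\<exists>B. P 0 B"
      using t by (auto simp: P_def intro!: exI[of _ "{}"])
  next
    fix B n assume "P n B"
    then have B: "B \<in> sets M" "B \<subseteq> A" "measure M B \<le> t"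
      by (simp_all add: P_def)
    obtain C where C: "C \<in> sets M" "C \<subseteq> A - B" "measure M C \<le> t - measure M B"
      and C_max: "\<And>D. D \<in> sets M \<Longrightarrow> D \<subseteq> A - B \<Longrightarrow> measure M D \<le> t - measure M B
        \<Longrightarrow> measure M D / 2 \<le> measure M C"
      using nearly_maximal_subset[of "A - B" M "t - measure M B"] A(1) B(1,3) by auto
    have "emeasure M S < \<infinity>" if "S \<subseteq> A" for S
      using emeasure_mono[OF that A(1)] A(2) by simp
    then have "measure M (B \<union> C) = measure M B + measure M C"
      using B C by (intro measure_Union) (auto simp: less_top)
    then have "P (Suc n) (B \<union> C) \<and> Q n B (B \<union> C)"
      using B C C_max by (auto simp: P_def Q_def)
    then show "\<exists>B'. P (Suc n) B' \<and> Q n B B'" ..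
  qed
  then obtain Bs where PQ: "\<And>n. P n (Bs n) \<and> Q n (Bs n) (Bs (Suc n))"
    by blast
  show ?thesis
  proof (rule that)
    show "Bs n \<in> sets M" "Bs n \<subseteq> A" "measure M (Bs n) \<le> t" for n
      using PQ[of n] by (simp_all add: P_def)
    show "incseq Bs"
      using PQ by (intro incseq_SucI) (simp add: Q_def)
    show "measure M D / 2 \<le> measure M (Bs (Suc n)) - measure M (Bs n)"
      if "D \<in> sets M" "D \<subseteq> A - Bs n" "measure M D \<le> t - measure M (Bs n)" for n D
      using PQ[of n] that unfolding Q_def by simp
  qed
qed

lemma nonatomic_subset_measure_eq:
  assumes na: "nonatomic M" and A: "A \<in> sets M" "emeasure M A < \<infinity>"
    and t: "0 \<le> t" "t \<le> measure M A"
  obtains B where "B \<in> sets M" "B \<subseteq> A" "measure M B = t"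
proof -
  obtain Bs where Bs: "\<And>n. Bs n \<in> sets M" "\<And>n. Bs n \<subseteq> A" "\<And>n. measure M (Bs n) \<le> t"
    and inc: "incseq Bs"
    and gap: "\<And>n D. D \<in> sets M \<Longrightarrow> D \<subseteq> A - Bs n \<Longrightarrow> measure M D \<le> t - measure M (Bs n) \<Longrightarrow>
      measure M D / 2 \<le> measure M (Bs (Suc n)) - measure M (Bs n)"
    using greedy_incseq_subsets[OF A t(1)] by metis
  have fin: "emeasure M S < \<infinity>" if "S \<subseteq> A" for S
    using emeasure_mono[OF that A(1)] A(2) by simp
  define B where "B = (\<Union>n. Bs n)"
  have B: "B \<in> sets M" "B \<subseteq> A"
    using Bs unfolding B_def by auto
  have lim: "(\<lambda>n. measure M (Bs n)) \<longlonglongrightarrow> measure M B"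
    unfolding B_def using Bs inc fin[OF B(2)[unfolded B_def]]
    by (intro Lim_measure_incseq) auto
  have "measure M B \<le> t"
    using Bs(3) by (intro LIMSEQ_le_const2[OF lim]) auto
  moreover have "\<not> measure M B < t"
  proof
    assume lt: "measure M B < t"
    have "measure M (A - B) = measure M A - measure M B"
      using fin[OF order_refl] A(1) B by (intro measure_Diff) (auto simp: less_top)
    then have "0 < measure M (A - B)"
      using lt t(2) by simp
    moreover have "A - B \<in> sets M" "0 < t - measure M B"
      using A(1) B(1) lt by auto
    ultimately obtain D where D: "D \<in> sets M" "D \<subseteq> A - B" "0 < measure M D" "measure M D \<le> t - measure M B"
      using nonatomic_small_subset[OF na _ _ fin[OF Diff_subset]] by metis
    have "measure M (Bs n) \<le> measure M B" for n
      using Bs(1) B(1) fin[OF B(2)] by (intro measure_mono_fmeasurable fmeasurableI) (auto simp: B_def)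
    txt \<open>The increments of the greedy sequence stay above \<open>\<mu>(D)/2\<close> but must tend to \<open>0\<close>.\<close>
    then have "measure M D / 2 \<le> measure M (Bs (Suc n)) - measure M (Bs n)" for n
      using D B_def by (intro gap) (auto, smt (verit))
    moreover have "(\<lambda>n. measure M (Bs (Suc n)) - measure M (Bs n)) \<longlonglongrightarrow> measure M B - measure M B"
      using LIMSEQ_Suc[OF lim] lim by (rule tendsto_diff)
    ultimately have "measure M D / 2 \<le> 0"
      by (intro LIMSEQ_le_const) auto
    with D(3) show False
      by simp
  qed
  ultimately have "measure M B = t"
    by linarith
  with B show ?thesis
    by (rule that)
qed

lemma sigma_finite_subset_finite_ge:
  assumes sf: "sigma_finite_measure M" and A: "A \<in> sets M" and t: "ennreal t \<le> emeasure M A"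
  obtains A' where "A' \<in> sets M" "A' \<subseteq> A" "emeasure M A' < \<infinity>" "ennreal t \<le> emeasure M A'"
proof (cases "emeasure M A < \<infinity>")
  case True
  then show ?thesis
    using that[OF A order_refl _ t] by blast
next
  case False
  obtain F where F: "range F \<subseteq> sets M" "(\<Union>i. F i) = space M" "\<And>i. emeasure M (F i) \<noteq> \<infinity>" "incseq F"
    using sigma_finite_measure.sigma_finite_incseq[OF sf] by metis
  have "(SUP i. emeasure M (A \<inter> F i)) = emeasure M (\<Union>i. A \<inter> F i)"
    using F(1,4) A by (intro SUP_emeasure_incseq) (auto simp: incseq_def)
  also have "(\<Union>i. A \<inter> F i) = A"
    using F(2) sets.sets_into_space[OF A] by blast
  finally have SUP_A: "(SUP i. emeasure M (A \<inter> F i)) = emeasure M A" .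
  have "ennreal t < (SUP i. emeasure M (A \<inter> F i))"
    unfolding SUP_A using False by (simp add: less_top[symmetric])
  then obtain i where i: "ennreal t < emeasure M (A \<inter> F i)"
    unfolding less_SUP_iff by blast
  have "emeasure M (A \<inter> F i) \<le> emeasure M (F i)"
    using F(1) by (intro emeasure_mono) auto
  moreover have "emeasure M (F i) < \<infinity>"
    using F(3)[of i] by (simp add: less_top)
  ultimately have "emeasure M (A \<inter> F i) < \<infinity>"
    by (rule le_less_trans)
  moreover have "A \<inter> F i \<in> sets M"
    using A F(1) by auto
  ultimately show ?thesis
    using i by (intro that[of "A \<inter> F i"]) auto
qed

lemma nonatomic_subset_emeasure_eq:
  assumes sf: "sigma_finite_measure M" and na: "nonatomic M"
    and A: "A \<in> sets M" and t: "0 \<le> t" "ennreal t \<le> emeasure M A"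
  obtains B where "B \<in> sets M" "B \<subseteq> A" "emeasure M B = ennreal t"
proof -
  obtain A' where A': "A' \<in> sets M" "A' \<subseteq> A" "emeasure M A' < \<infinity>" "ennreal t \<le> emeasure M A'"
    using sigma_finite_subset_finite_ge[OF sf A t(2)] by metis
  then have "t \<le> measure M A'"
    by (simp add: emeasure_eq_ennreal_measure ennreal_le_iff)
  then obtain B where B: "B \<in> sets M" "B \<subseteq> A'" "measure M B = t"
    using nonatomic_subset_measure_eq[OF na A'(1,3) t(1)] by blast
  have "emeasure M B < \<infinity>"
    using emeasure_mono[OF B(2) A'(1)] A'(3) by simp
  then show ?thesis
    using that[of B] B A'(2) by (auto simp: emeasure_eq_ennreal_measure)
qed

lemma nonatomic_incseq_emeasure_pow2:
  assumes sf: "sigma_finite_measure M" and na: "nonatomic M" and inf: "emeasure M (space M) = \<infinity>"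
  obtains G where "\<And>n. G n \<in> sets M" "\<And>n. emeasure M (G n) = 2 ^ n" "incseq G"
proof -
  define P where "P n G \<longleftrightarrow> G \<in> sets M \<and> emeasure M G = 2 ^ n" for n :: nat and G
  have "\<exists>G. \<forall>n. P n (G n) \<and> G n \<subseteq> G (Suc n)"
  proof (rule dependent_nat_choice)
    obtain G where "G \<in> sets M" "emeasure M G = ennreal 1"
      by (rule nonatomic_subset_emeasure_eq[OF sf na sets.top, of 1]) (simp_all add: inf)
    then show "\<exists>G. P 0 G"
      by (auto simp: P_def)
  next
    fix G n assume "P n G"
    then have G: "G \<in> sets M" "emeasure M G = 2 ^ n"
      by (simp_all add: P_def)
    have compl: "emeasure M (space M - G) = \<infinity>"
      using emeasure_compl[OF G(1)] G(2) inf by (simp add: ennreal_top_minus power_eq_top_ennreal)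
    obtain H where H: "H \<in> sets M" "H \<subseteq> space M - G" "emeasure M H = ennreal (2 ^ n)"
      by (rule nonatomic_subset_emeasure_eq[OF sf na sets.Diff[OF sets.top G(1)], of "2 ^ n"])
        (simp_all add: compl)
    have "emeasure M (G \<union> H) = 2 ^ n + 2 ^ n"
      using G H by (subst plus_emeasure[symmetric]) (auto simp: ennreal_power[symmetric])
    then have "P (Suc n) (G \<union> H)"
      using G H by (simp add: P_def mult_2)
    then show "\<exists>G'. P (Suc n) G' \<and> G \<subseteq> G'"
      by blast
  qed
  then obtain G where PG: "\<And>n. P n (G n)" and sub: "\<And>n. G n \<subseteq> G (Suc n)"
    by blast
  have "G n \<in> sets M" "emeasure M (G n) = 2 ^ n" for n
    using PG[of n] by (simp_all add: P_def)
  moreover have "incseq G"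
    using sub by (rule incseq_SucI)
  ultimately show ?thesis
    by (rule that)
qed

lemma sigma_finite_exhausting_compl:
  assumes "sigma_finite_measure M"
  obtains F where "\<And>k. F k \<in> sets M" "\<And>k. emeasure M (F k) < \<infinity>"
    "AE x in M. (\<lambda>k. indicator (space M - F k) x :: real) \<longlonglongrightarrow> 0"
proof -
  obtain F where F: "range F \<subseteq> sets M" "(\<Union>i. F i) = space M" "\<And>i. emeasure M (F i) \<noteq> \<infinity>" "incseq F"
    using sigma_finite_measure.sigma_finite_incseq[OF assms] by metis
  have "AE x in M. (\<lambda>k. indicator (space M - F k) x :: real) \<longlonglongrightarrow> 0"
  proof (rule AE_I2)
    fix x assume "x \<in> space M"
    then obtain i where "x \<in> F i"
      using F(2) by auto
    then have "eventually (\<lambda>k. indicator (space M - F k) x = (0 :: real)) sequentially"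
      using F(4) unfolding eventually_sequentially incseq_def by (intro exI[of _ i]) (force split: split_indicator)
    then show "(\<lambda>k. indicator (space M - F k) x :: real) \<longlonglongrightarrow> 0"
      by (rule tendsto_eventually)
  qed
  with F(1,3) show ?thesis
    by (intro that) (auto simp: less_top)
qed

lemma AE_indicator_tendsto_0_if_summable:
  assumes "\<And>n. F n \<in> sets M" "\<And>n. emeasure M (F n) < \<infinity>" "summable (\<lambda>n. measure M (F n))"
  shows "AE x in M. (\<lambda>n. indicator (F n) x :: real) \<longlonglongrightarrow> 0"
  using borel_cantelli_AE1[OF assms]
proof (rule AE_mp, intro AE_I2 impI)
  fix x assume "eventually (\<lambda>n. x \<in> space M - F n) sequentially"
  then have "eventually (\<lambda>n. indicator (F n) x = (0 :: real)) sequentially"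
    by (rule eventually_mono) simp
  then show "(\<lambda>n. indicator (F n) x :: real) \<longlonglongrightarrow> 0"
    by (rule tendsto_eventually)
qed

lemma measure_inter_tendsto_0:
  assumes L: "L \<in> sets M" "emeasure M L < \<infinity>" and E: "\<And>k. E k \<in> sets M"
    and AE: "AE x in M. (\<lambda>k. indicator (E k) x :: real) \<longlonglongrightarrow> 0"
  shows "(\<lambda>k. measure M (L \<inter> E k)) \<longlonglongrightarrow> 0"
proof -
  have "(\<lambda>k. integral\<^sup>L M (indicator (L \<inter> E k) :: 'a \<Rightarrow> real)) \<longlonglongrightarrow> integral\<^sup>L M (\<lambda>x. 0 :: real)"
  proof (rule integral_dominated_convergence[where w = "indicator L"])
    show "integrable M (indicator L :: 'a \<Rightarrow> real)"
      using L by (simp add: integrable_indicator_iff Int_absorb2 sets.sets_into_space)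
    show "AE x in M. (\<lambda>k. indicator (L \<inter> E k) x :: real) \<longlonglongrightarrow> 0"
      using AE
    proof (rule AE_mp, intro AE_I2 impI)
      fix x assume "(\<lambda>k. indicator (E k) x :: real) \<longlonglongrightarrow> 0"
      then have "(\<lambda>k. indicator L x * indicator (E k) x :: real) \<longlonglongrightarrow> indicator L x * 0"
        by (intro tendsto_mult tendsto_const)
      then show "(\<lambda>k. indicator (L \<inter> E k) x :: real) \<longlonglongrightarrow> 0"
        by (simp add: indicator_inter_arith)
    qed
  qed (use L E in \<open>auto split: split_indicator\<close>)
  moreover have "integral\<^sup>L M (indicator (L \<inter> E k) :: 'a \<Rightarrow> real) = measure M (L \<inter> E k)" for k
    using L(1) E[of k] by (simp add: Int_absorb2 sets.sets_into_space)
  ultimately show ?thesis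
    by simp
qed

lemma ennreal_less_mult_imp_less_factor:
  fixes a b c :: ennreal
  assumes "c < a * b"
  obtains s where "s < b" "c < a * s"
proof -
  have "a * b = (SUP s\<in>{..<b}. a * s)"
    using SUP_mult_left_ennreal[of a "\<lambda>s. s" "{..<b}"] by (simp add: Sup_lessThan)
  with assms show ?thesis
    using that by (auto simp: less_SUP_iff)
qed

lemma ennreal_mult_le_of_less_le:
  fixes a b d :: ennreal
  assumes "\<And>s. s < b \<Longrightarrow> a * s \<le> d"
  shows "a * b \<le> d"
proof (rule ccontr)
  assume "\<not> a * b \<le> d"
  then obtain s where "s < b" "d < a * s"
    by (rule ennreal_less_mult_imp_less_factor[OF iffD1[OF not_le]])
  with assms show False
    by (simp add: not_le[symmetric])
qed

lemma ennreal_exists_pos_mult_le: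
  fixes c d :: ennreal
  assumes "c < \<infinity>" "0 < d"
  obtains e :: real where "0 < e" "c * ennreal e \<le> d"
proof -
  have "((\<lambda>e. c * ennreal e) \<longlongrightarrow> c * ennreal 0) (at_right 0)"
    using assms(1) by (intro ennreal_tendsto_cmult tendsto_intros) auto
  from order_tendstoD(2)[OF this] assms(2)
  obtain b where "0 < b" "\<And>e. 0 < e \<Longrightarrow> e < b \<Longrightarrow> c * ennreal e < d"
    unfolding eventually_at_right_field by auto
  then have "0 < b / 2" "c * ennreal (b / 2) \<le> d"
    by (auto intro: less_imp_le)
  then show ?thesis
    by (rule that)
qed

lemma ennreal_tendsto_0I:
  fixes F :: "'b \<Rightarrow> ennreal"
  assumes "c < \<infinity>" "\<And>e. 0 < e \<Longrightarrow> eventually (\<lambda>x. F x \<le> c * ennreal e) L"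
  shows "(F \<longlongrightarrow> 0) L"
proof (rule order_tendstoI)
  fix a :: ennreal
  assume "0 < a"
  then obtain d where "0 < d" "d < a"
    using dense by blast
  moreover obtain e where "0 < e" "c * ennreal e \<le> d"
    by (rule ennreal_exists_pos_mult_le[OF assms(1) \<open>0 < d\<close>])
  ultimately show "eventually (\<lambda>x. F x < a) L"
    using eventually_mono[OF assms(2)] by (metis le_less_trans order.trans)
qed simp

section \<open>Distribution functions and rearrangements\<close>

lemma distf_antimono:
  assumes "g \<in> borel_measurable M" "s \<le> s'"
  shows "distf M g s' \<le> distf M g s"
  unfolding distf_def using assms by (intro emeasure_mono) (auto, measurable)

lemma distf_mono:
  assumes "h \<in> borel_measurable M" "\<And>x. x \<in> space M \<Longrightarrow> g x \<le> h x"
  shows "distf M g s \<le> distf M h s"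
  unfolding distf_def using assms by (intro emeasure_mono) (auto intro: less_le_trans, measurable)

lemma distf_indicator: "E \<in> sets M \<Longrightarrow> distf M (indicator E) s = (if s < 1 then emeasure M E else 0)"
  unfolding distf_def using sets.sets_into_space[of E M]
  by (cases "s < 1") (auto simp: indicator_def intro!: arg_cong[where f="emeasure M"] dest: leD)

lemma rearr_geI:
  assumes "\<And>\<sigma>. \<sigma> < s \<Longrightarrow> ennreal t < distf M g \<sigma>"
  shows "s \<le> rearr M g t"
  unfolding rearr_def
proof (rule Inf_greatest)
  fix \<sigma> assume "\<sigma> \<in> {s. distf M g s \<le> ennreal t}"
  then show "s \<le> \<sigma>"
    using assms[of \<sigma>] by (metis mem_Collect_eq not_le)
qed

lemma rearr_leI: "distf M g s \<le> ennreal t \<Longrightarrow> rearr M g t \<le> s"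
  unfolding rearr_def by (rule Inf_lower) simp

lemma distf_gt_if_less_rearr: "s < rearr M g t \<Longrightarrow> ennreal t < distf M g s"
  using rearr_leI[of M g s t] by (meson not_le)

lemma distf_le_if_rearr_less:
  assumes "g \<in> borel_measurable M" "rearr M g t < s"
  shows "distf M g s \<le> ennreal t"
proof -
  obtain \<sigma> where "\<sigma> < s" "distf M g \<sigma> \<le> ennreal t"
    using assms(2) unfolding rearr_def by (auto simp: Inf_less_iff)
  moreover have "distf M g s \<le> distf M g \<sigma>"
    using \<open>\<sigma> < s\<close> by (intro distf_antimono[OF assms(1)]) simp
  ultimately show ?thesis
    by simp
qed

lemma rearr_mono:
  assumes "h \<in> borel_measurable M" "\<And>x. x \<in> space M \<Longrightarrow> g x \<le> h x"
  shows "rearr M g t \<le> rearr M h t"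
  unfolding rearr_def
proof (intro Inf_superset_mono subsetI)
  fix \<sigma> assume "\<sigma> \<in> {s. distf M h s \<le> ennreal t}"
  then show "\<sigma> \<in> {s. distf M g s \<le> ennreal t}"
    using distf_mono[OF assms, of \<sigma>] by simp
qed

lemma rearr_antimono: "t \<le> t' \<Longrightarrow> rearr M g t' \<le> rearr M g t"
  unfolding rearr_def
proof (intro Inf_superset_mono subsetI)
  fix \<sigma> assume "t \<le> t'" "\<sigma> \<in> {s. distf M g s \<le> ennreal t}"
  then show "\<sigma> \<in> {s. distf M g s \<le> ennreal t'}"
    using ennreal_leI[of t t'] by simp
qed

lemma rearr_restrict_ge:
  assumes g [measurable]: "g \<in> borel_measurable M" and F [measurable]: "F \<in> sets M"
    and F_sub: "F \<subseteq> {x \<in> space M. \<sigma> < g x}"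
    and t: "ennreal t < emeasure M F"
  shows "\<sigma> \<le> rearr M (\<lambda>x. g x * indicator F x) t"
proof (rule rearr_geI)
  fix \<sigma>' assume "\<sigma>' < \<sigma>"
  then have "F \<subseteq> {x \<in> space M. \<sigma>' < g x * indicator F x}"
    using F_sub by (auto intro: less_trans)
  then have "emeasure M F \<le> distf M (\<lambda>x. g x * indicator F x) \<sigma>'"
    unfolding distf_def by (intro emeasure_mono) measurable
  with t show "ennreal t < distf M (\<lambda>x. g x * indicator F x) \<sigma>'"
    by (rule less_le_trans)
qed

lemma rearr_restrict_compl_ge:
  assumes g [measurable]: "g \<in> borel_measurable M" and F [measurable]: "F \<in> sets M"
    and F_small: "emeasure M F \<le> ennreal a"
    and nonneg: "0 \<le> a" "0 \<le> t" and \<sigma>: "\<sigma> < rearr M g (t + a)"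
  shows "\<sigma> \<le> rearr M (\<lambda>x. g x * indicator (space M - F) x) t"
proof (rule rearr_geI)
  fix \<sigma>' assume "\<sigma>' < \<sigma>"
  define h where "h x = g x * indicator (space M - F) x" for x
  have "ennreal (t + a) < distf M g \<sigma>'"
    using \<open>\<sigma>' < \<sigma>\<close> \<sigma> by (intro distf_gt_if_less_rearr) (rule less_trans)
  also have "distf M g \<sigma>' \<le> emeasure M ({x \<in> space M. \<sigma>' < h x} \<union> F)"
    unfolding distf_def h_def by (intro emeasure_mono) (auto simp: indicator_def)
  also have "\<dots> \<le> distf M h \<sigma>' + emeasure M F"
    unfolding distf_def h_def by (intro emeasure_subadditive) measurable
  also have "\<dots> \<le> distf M h \<sigma>' + ennreal a"
    using F_small by (rule add_left_mono)
  finally have lt: "ennreal t + ennreal a < distf M h \<sigma>' + ennreal a"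
    using nonneg by (simp add: ennreal_plus)
  show "ennreal t < distf M h \<sigma>'"
  proof (rule ccontr)
    assume "\<not> ennreal t < distf M h \<sigma>'"
    then have "distf M h \<sigma>' + ennreal a \<le> ennreal t + ennreal a"
      by (simp add: add_right_mono)
    with lt show False
      by simp
  qed
qed

lemma fundf_mult_rearr_le_marc: "0 \<le> t \<Longrightarrow> fundf M N t * rearr M g t \<le> marc M N g"
  unfolding marc_def by (rule SUP_upper) auto

lemma marc_leI: "(\<And>t. 0 \<le> t \<Longrightarrow> fundf M N t * rearr M g t \<le> B) \<Longrightarrow> marc M N g \<le> B"
  unfolding marc_def by (rule SUP_least) auto

section \<open>Absolutely continuous quasinorms\<close>

lemma modf_measurable: "f \<in> borel_measurable M \<Longrightarrow> modf f \<in> borel_measurable M"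
  unfolding modf_def by measurable

lemma acpart_tendsto_0:
  assumes "f \<in> acpart M N'" "\<And>k. E k \<in> sets M" "AE x in M. (\<lambda>k. indicator (E k) x :: real) \<longlonglongrightarrow> 0"
  shows "(\<lambda>k. N' (\<lambda>x. modf f x * indicator (E k) x)) \<longlonglongrightarrow> 0"
  using assms unfolding acpart_def by blast

lemma acpart_uniformly_small:
  assumes f: "f \<in> acpart M N'" and \<epsilon>: "0 < \<epsilon>"
  obtains \<delta> :: real where "0 < \<delta>"
    "\<And>F. F \<in> sets M \<Longrightarrow> emeasure M F \<le> ennreal \<delta> \<Longrightarrow> N' (\<lambda>x. modf f x * indicator F x) < \<epsilon>"
proof (rule ccontr)
  assume "\<not> thesis"
  have "\<exists>F. F \<in> sets M \<and> emeasure M F \<le> ennreal ((1/2) ^ n) \<and> \<epsilon> \<le> N' (\<lambda>x. modf f x * indicator F x)" for n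
  proof (rule ccontr)
    assume "\<nexists>F. F \<in> sets M \<and> emeasure M F \<le> ennreal ((1/2) ^ n) \<and> \<epsilon> \<le> N' (\<lambda>x. modf f x * indicator F x)"
    then have "N' (\<lambda>x. modf f x * indicator F x) < \<epsilon>"
      if "F \<in> sets M" "emeasure M F \<le> ennreal ((1/2) ^ n)" for F
      using that by (metis not_le)
    with that[of "(1/2) ^ n"] \<open>\<not> thesis\<close> show False
      by simp
  qed
  then obtain F where F: "\<And>n. F n \<in> sets M" "\<And>n. emeasure M (F n) \<le> ennreal ((1/2) ^ n)"
    and large: "\<And>n. \<epsilon> \<le> N' (\<lambda>x. modf f x * indicator (F n) x)"
    by metis
  have fin: "emeasure M (F n) < \<infinity>" for n
    using F(2)[of n] by (simp add: le_less_trans)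
  have "measure M (F n) \<le> (1/2) ^ n" for n
    using enn2real_mono[OF F(2)[of n]] unfolding measure_def by simp
  then have "summable (\<lambda>n. measure M (F n))"
    by (intro summable_comparison_test[OF _ summable_geometric[of "1/2"]]) auto
  with F(1) fin have "AE x in M. (\<lambda>n. indicator (F n) x :: real) \<longlonglongrightarrow> 0"
    by (rule AE_indicator_tendsto_0_if_summable)
  with f F(1) have "(\<lambda>n. N' (\<lambda>x. modf f x * indicator (F n) x)) \<longlonglongrightarrow> 0"
    by (rule acpart_tendsto_0)
  with large have "\<epsilon> \<le> 0"
    by (intro LIMSEQ_le_const) auto
  with \<epsilon> show False
    by simp
qed

section \<open>Rearrangement-invariant quasinorms on non-atomic spaces\<close>

text \<open>Only the axioms of a quasi-Banach function norm that the argument uses.\<close>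

locale ri_quasinorm =
  fixes M :: "'a measure" and N :: "('a \<Rightarrow> ennreal) \<Rightarrow> ennreal" and C :: real
  assumes sigma_finite: "sigma_finite_measure M"
    and nonatomic: "nonatomic M"
    and infinite_space: "emeasure M (space M) = \<infinity>"
    and zero_iff: "\<And>f. f \<in> borel_measurable M \<Longrightarrow> N f = 0 \<longleftrightarrow> (AE x in M. f x = 0)"
    and concavity_ge_1: "1 \<le> C"
    and quasi_triangle: "\<And>f g. f \<in> borel_measurable M \<Longrightarrow> g \<in> borel_measurable M \<Longrightarrow>
      N (\<lambda>x. f x + g x) \<le> ennreal C * (N f + N g)"
    and mono_AE: "\<And>f g. f \<in> borel_measurable M \<Longrightarrow> g \<in> borel_measurable M \<Longrightarrow>
      (AE x in M. f x \<le> g x) \<Longrightarrow> N f \<le> N g"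
    and indicator_finite: "\<And>E. E \<in> sets M \<Longrightarrow> emeasure M E < \<infinity> \<Longrightarrow> N (indicator E) < \<infinity>"
    and rearrangement_invariant: "rinv M N"
begin

lemma subset_emeasure_eq:
  assumes "A \<in> sets M" "0 \<le> t" "ennreal t \<le> emeasure M A"
  obtains B where "B \<in> sets M" "B \<subseteq> A" "emeasure M B = ennreal t"
  using nonatomic_subset_emeasure_eq[OF sigma_finite nonatomic assms] by blast

lemma set_emeasure_eq:
  assumes "0 \<le> t"
  obtains E where "E \<in> sets M" "emeasure M E = ennreal t"
proof -
  obtain E where "E \<in> sets M" "E \<subseteq> space M" "emeasure M E = ennreal t"
    by (rule subset_emeasure_eq[OF sets.top assms]) (simp add: infinite_space)
  then show ?thesis
    using that by blast
qed

lemma N_eq_if_distf_eq: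
  assumes "f \<in> borel_measurable M" "g \<in> borel_measurable M" "\<And>s. distf M f s = distf M g s"
  shows "N f = N g"
proof -
  have "rearr M f t = rearr M g t" for t
    unfolding rearr_def using assms(3) by simp
  then show ?thesis
    using rearrangement_invariant assms(1,2) unfolding rinv_def by blast
qed

lemma N_indicator_eq_fundf:
  assumes E: "E \<in> sets M" "emeasure M E = ennreal t" and t: "0 \<le> t"
  shows "N (indicator E) = fundf M N t"
proof -
  define E' where "E' = (SOME E. E \<in> sets M \<and> emeasure M E = ennreal t)"
  obtain E0 where E0: "E0 \<in> sets M" "emeasure M E0 = ennreal t"
    using set_emeasure_eq[OF t] by blast
  have "E' \<in> sets M \<and> emeasure M E' = ennreal t"
    unfolding E'_def by (rule someI[of _ E0]) (use E0 in simp)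
  then have E': "E' \<in> sets M" "emeasure M E' = ennreal t"
    by simp_all
  have "distf M (indicator E) s = distf M (indicator E') s" for s
    using E E' by (simp add: distf_indicator)
  then have "N (indicator E) = N (indicator E')"
    using E(1) E'(1) by (intro N_eq_if_distf_eq) auto
  then show ?thesis
    unfolding fundf_def E'_def .
qed

lemma fundf_0: "fundf M N 0 = 0"
  using N_indicator_eq_fundf[of "{}" 0] zero_iff[of "indicator {}"] by simp

lemma fundf_finite:
  assumes "0 \<le> t"
  shows "fundf M N t < \<infinity>"
proof -
  obtain E where E: "E \<in> sets M" "emeasure M E = ennreal t"
    using set_emeasure_eq[OF assms] by blast
  then show ?thesis
    using indicator_finite[OF E(1)] N_indicator_eq_fundf[OF E assms] by simp
qed

lemma fundf_pos:
  assumes "0 < t"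
  shows "0 < fundf M N t"
proof -
  obtain E where E: "E \<in> sets M" "emeasure M E = ennreal t"
    by (rule set_emeasure_eq[of t]) (use assms in simp)
  have "\<not> (AE x in M. indicator E x = (0 :: ennreal))"
  proof
    assume "AE x in M. indicator E x = (0 :: ennreal)"
    then have "AE x in M. x \<notin> E"
      by (rule AE_mp) (auto simp: indicator_def)
    then have "emeasure M E = 0"
      using AE_iff_null_sets[OF E(1)] by auto
    with E(2) assms show False
      by simp
  qed
  then show ?thesis
    using zero_iff[of "indicator E"] N_indicator_eq_fundf[OF E] E(1) assms by (simp add: zero_less_iff_neq_zero)
qed

lemma fundf_mono:
  assumes "0 \<le> s" "s \<le> t"
  shows "fundf M N s \<le> fundf M N t"
proof -
  obtain E where E: "E \<in> sets M" "emeasure M E = ennreal t"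
    by (rule set_emeasure_eq[of t]) (use assms in simp)
  obtain F where F: "F \<in> sets M" "F \<subseteq> E" "emeasure M F = ennreal s"
    by (rule subset_emeasure_eq[OF E(1) assms(1)]) (use E(2) assms(2) in \<open>simp add: ennreal_leI\<close>)
  have "N (indicator F) \<le> N (indicator E)"
    using F(2) by (intro mono_AE borel_measurable_indicator F(1) E(1) AE_I2) (auto split: split_indicator)
  then show ?thesis
    using N_indicator_eq_fundf[OF F(1,3)] N_indicator_eq_fundf[OF E] assms by simp
qed

lemma fundf_double:
  assumes t: "0 \<le> t"
  shows "fundf M N (2 * t) \<le> ennreal (2 * C) * fundf M N t"
proof -
  obtain E where E: "E \<in> sets M" "emeasure M E = ennreal (2 * t)"
    by (rule set_emeasure_eq[of "2 * t"]) (use t in simp)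
  obtain A where A: "A \<in> sets M" "A \<subseteq> E" "emeasure M A = ennreal t"
    by (rule subset_emeasure_eq[OF E(1) t]) (use E(2) t in \<open>simp add: ennreal_leI\<close>)
  have "emeasure M (E - A) = emeasure M E - emeasure M A"
    using A E by (intro emeasure_Diff) auto
  also have "\<dots> = ennreal t"
    using E(2) A(3) t by (simp add: ennreal_minus)
  finally have EA: "E - A \<in> sets M" "emeasure M (E - A) = ennreal t"
    using E(1) A(1) by auto
  have "indicator E = (\<lambda>x. indicator A x + indicator (E - A) x :: ennreal)"
    using A(2) by (auto simp: fun_eq_iff split: split_indicator)
  then have "fundf M N (2 * t) = N (\<lambda>x. indicator A x + indicator (E - A) x)"
    using N_indicator_eq_fundf[OF E] t by simp
  also have "\<dots> \<le> ennreal C * (N (indicator A) + N (indicator (E - A)))"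
    using A(1) EA(1) by (intro quasi_triangle borel_measurable_indicator)
  also have "\<dots> = ennreal C * (2 * fundf M N t)"
    using N_indicator_eq_fundf[OF A(1,3) t] N_indicator_eq_fundf[OF EA t] by (simp add: mult_2)
  also have "\<dots> = ennreal (2 * C) * fundf M N t"
    using concavity_ge_1 by (simp add: ennreal_mult mult.assoc mult.left_commute)
  finally show ?thesis .
qed

lemma fundf_mult_le_marc_half:
  assumes "0 < t" "\<sigma> \<le> rearr M h (t / 2)"
  shows "fundf M N t * \<sigma> \<le> ennreal (2 * C) * marc M N h"
proof -
  have "fundf M N t * \<sigma> \<le> (ennreal (2 * C) * fundf M N (t / 2)) * \<sigma>"
    using fundf_double[of "t / 2"] assms(1) by (intro mult_right_mono) auto
  also have "\<dots> \<le> ennreal (2 * C) * (fundf M N (t / 2) * rearr M h (t / 2))"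
    using assms(2) by (simp add: mult.assoc mult_left_mono)
  also have "\<dots> \<le> ennreal (2 * C) * marc M N h"
    using assms(1) by (intro mult_left_mono fundf_mult_rearr_le_marc) auto
  finally show ?thesis .
qed

lemma exists_restriction_marc_ge:
  assumes g [measurable]: "g \<in> borel_measurable M" and t: "0 < t" and \<sigma>: "\<sigma> < rearr M g t"
  obtains F where "F \<in> sets M" "emeasure M F = ennreal t"
    "fundf M N t * \<sigma> \<le> ennreal (2 * C) * marc M N (\<lambda>x. g x * indicator F x)"
proof -
  have L: "{x \<in> space M. \<sigma> < g x} \<in> sets M"
    by measurable
  have big: "ennreal t \<le> emeasure M {x \<in> space M. \<sigma> < g x}"
    using distf_gt_if_less_rearr[OF \<sigma>] unfolding distf_def by simp
  obtain F where F: "F \<in> sets M" "F \<subseteq> {x \<in> space M. \<sigma> < g x}" "emeasure M F = ennreal t"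
    by (rule subset_emeasure_eq[OF L, of t]) (use t big in simp_all)
  have "\<sigma> \<le> rearr M (\<lambda>x. g x * indicator F x) (t / 2)"
    using t F(3) by (intro rearr_restrict_ge[OF g F(1,2)]) (simp add: ennreal_lessI)
  then show ?thesis
    by (intro that[OF F(1,3)] fundf_mult_le_marc_half t)
qed

lemma fundf_mult_rearr_le_marc_compl:
  assumes g: "g \<in> borel_measurable M"
    and F: "F \<in> sets M" "emeasure M F \<le> ennreal a" "0 \<le> a"
    and t: "2 * a \<le> t" "0 < t"
  shows "fundf M N t * rearr M g t \<le> ennreal (2 * C) * marc M N (\<lambda>x. g x * indicator (space M - F) x)"
proof (rule ennreal_mult_le_of_less_le)
  fix \<sigma> assume "\<sigma> < rearr M g t"
  also have "rearr M g t \<le> rearr M g (t / 2 + a)"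
    using t by (intro rearr_antimono) simp
  finally have "\<sigma> \<le> rearr M (\<lambda>x. g x * indicator (space M - F) x) (t / 2)"
    using t by (intro rearr_restrict_compl_ge[OF g F]) auto
  then show "fundf M N t * \<sigma> \<le> ennreal (2 * C) * marc M N (\<lambda>x. g x * indicator (space M - F) x)"
    by (rule fundf_mult_le_marc_half[OF t(2)])
qed

section \<open>The absolutely continuous part of the weak Marcinkiewicz space\<close>

lemma acpart_tendsto_0_at_right:
  assumes f: "f \<in> acpart M (marc M N)"
  shows "((\<lambda>t. fundf M N t * rearr M (modf f) t) \<longlongrightarrow> 0) (at_right 0)"
proof (rule ennreal_tendsto_0I[of "ennreal (2 * C)"])
  fix e :: real assume "0 < e"
  then obtain \<delta> where \<delta>: "0 < \<delta>"
    and small: "\<And>F. F \<in> sets M \<Longrightarrow> emeasure M F \<le> ennreal \<delta> \<Longrightarrow>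
      marc M N (\<lambda>x. modf f x * indicator F x) < ennreal e"
    using acpart_uniformly_small[OF f, of "ennreal e"] by auto
  have g: "modf f \<in> borel_measurable M"
    using f unfolding acpart_def fspace_def by (auto intro: modf_measurable)
  have "fundf M N t * rearr M (modf f) t \<le> ennreal (2 * C) * ennreal e" if t: "0 < t" "t < \<delta>" for t
  proof (rule ennreal_mult_le_of_less_le)
    fix \<sigma> assume "\<sigma> < rearr M (modf f) t"
    then obtain F where F: "F \<in> sets M" "emeasure M F = ennreal t"
      and marc_F: "fundf M N t * \<sigma> \<le> ennreal (2 * C) * marc M N (\<lambda>x. modf f x * indicator F x)"
      by (rule exists_restriction_marc_ge[OF g t(1)])
    have "marc M N (\<lambda>x. modf f x * indicator F x) \<le> ennreal e"
      using small[OF F(1)] F(2) t by (simp add: ennreal_leI less_imp_le)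
    with marc_F show "fundf M N t * \<sigma> \<le> ennreal (2 * C) * ennreal e"
      by (meson mult_left_mono order_trans zero_le)
  qed
  with \<delta> show "eventually (\<lambda>t. fundf M N t * rearr M (modf f) t \<le> ennreal (2 * C) * ennreal e) (at_right 0)"
    unfolding eventually_at_right_field by blast
qed simp

lemma acpart_tendsto_0_at_top:
  assumes f: "f \<in> acpart M (marc M N)"
  shows "((\<lambda>t. fundf M N t * rearr M (modf f) t) \<longlongrightarrow> 0) at_top"
proof (rule ennreal_tendsto_0I[of "ennreal (2 * C)"])
  fix e :: real assume "0 < e"
  have g: "modf f \<in> borel_measurable M"
    using f unfolding acpart_def fspace_def by (auto intro: modf_measurable)
  obtain F where F: "\<And>k. F k \<in> sets M" "\<And>k. emeasure M (F k) < \<infinity>"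
    and AE: "AE x in M. (\<lambda>k. indicator (space M - F k) x :: real) \<longlonglongrightarrow> 0"
    using sigma_finite_exhausting_compl[OF sigma_finite] by metis
  have "(\<lambda>k. marc M N (\<lambda>x. modf f x * indicator (space M - F k) x)) \<longlonglongrightarrow> 0"
    using F(1) by (intro acpart_tendsto_0[OF f _ AE]) auto
  then have "eventually (\<lambda>k. marc M N (\<lambda>x. modf f x * indicator (space M - F k) x) < ennreal e) sequentially"
    using \<open>0 < e\<close> by (intro order_tendstoD(2)) auto
  then obtain k where k: "marc M N (\<lambda>x. modf f x * indicator (space M - F k) x) < ennreal e"
    by (auto dest: eventually_happens)
  have "fundf M N t * rearr M (modf f) t \<le> ennreal (2 * C) * ennreal e"
    if "2 * measure M (F k) \<le> t" "0 < t" for t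
  proof -
    have "fundf M N t * rearr M (modf f) t
        \<le> ennreal (2 * C) * marc M N (\<lambda>x. modf f x * indicator (space M - F k) x)"
      using F(1,2)[of k] that
      by (intro fundf_mult_rearr_le_marc_compl[OF g]) (auto simp: emeasure_eq_ennreal_measure)
    also have "\<dots> \<le> ennreal (2 * C) * ennreal e"
      using k by (intro mult_left_mono) auto
    finally show ?thesis .
  qed
  moreover have "eventually (\<lambda>t. 2 * measure M (F k) \<le> t \<and> 0 < t) at_top"
    by (intro eventually_conj eventually_ge_at_top eventually_gt_at_top)
  ultimately show "eventually (\<lambda>t. fundf M N t * rearr M (modf f) t \<le> ennreal (2 * C) * ennreal e) at_top"
    by (auto elim: eventually_mono)
qed simp

lemma distf_finite_if_tendsto_0_at_top:
  assumes g: "g \<in> borel_measurable M" and s: "0 < s"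
    and lim: "((\<lambda>t. fundf M N t * rearr M g t) \<longlongrightarrow> 0) at_top"
  shows "distf M g (ennreal s) < \<infinity>"
proof -
  have "0 < fundf M N 1 * ennreal s"
    using fundf_pos[of 1] s by (simp add: ennreal_zero_less_mult_iff)
  with lim have "eventually (\<lambda>t. 1 \<le> t \<and> fundf M N t * rearr M g t < fundf M N 1 * ennreal s) at_top"
    by (intro eventually_conj eventually_ge_at_top order_tendstoD(2))
  then obtain t where t: "1 \<le> t" "fundf M N t * rearr M g t < fundf M N 1 * ennreal s"
    by (auto dest: eventually_happens)
  have "rearr M g t < ennreal s"
  proof (rule ccontr)
    assume "\<not> rearr M g t < ennreal s"
    then have "fundf M N 1 * ennreal s \<le> fundf M N t * rearr M g t"
      using t(1) by (intro mult_mono fundf_mono) auto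
    with t(2) show False
      by simp
  qed
  then have "distf M g (ennreal s) \<le> ennreal t"
    by (rule distf_le_if_rearr_less[OF g])
  then show ?thesis
    using ennreal_less_top[of t] by (metis infinity_ennreal_def le_less_trans)
qed

lemma marc_le_if_profile_small:
  assumes g: "g \<in> borel_measurable M" and h_le: "\<And>x. x \<in> space M \<Longrightarrow> h x \<le> g x"
    and \<delta>: "0 < \<delta>" "\<delta> \<le> T"
    and small: "\<And>t. 0 < t \<Longrightarrow> t < \<delta> \<Longrightarrow> fundf M N t * rearr M g t \<le> \<epsilon>"
    and large: "\<And>t. T \<le> t \<Longrightarrow> fundf M N t * rearr M g t \<le> \<epsilon>"
    and middle: "fundf M N T * s \<le> \<epsilon>"
    and level: "distf M h s \<le> ennreal \<delta>"
  shows "marc M N h \<le> \<epsilon>"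
proof (rule marc_leI)
  fix t :: real assume t: "0 \<le> t"
  have h_g: "fundf M N t * rearr M h t \<le> fundf M N t * rearr M g t"
    by (intro mult_left_mono rearr_mono[OF g h_le]) auto
  consider "t = 0" | "0 < t" "t < \<delta>" | "T \<le> t" | "\<delta> \<le> t" "t < T"
    using t by linarith
  then show "fundf M N t * rearr M h t \<le> \<epsilon>"
  proof cases
    case 1
    then show ?thesis
      by (simp add: fundf_0)
  next
    case 2
    then show ?thesis
      using h_g small[of t] by simp
  next
    case 3
    then show ?thesis
      using h_g large[of t] by simp
  next
    case 4
    have "rearr M h t \<le> rearr M h \<delta>"
      using 4 by (intro rearr_antimono) simp
    also have "rearr M h \<delta> \<le> s"
      using level by (rule rearr_leI)
    finally have "fundf M N t * rearr M h t \<le> fundf M N T * s"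
      using 4 \<delta> by (intro mult_mono fundf_mono) auto
    with middle show ?thesis
      by simp
  qed
qed

lemma marc_small_if_level_small:
  assumes g: "g \<in> borel_measurable M"
    and lim0: "((\<lambda>t. fundf M N t * rearr M g t) \<longlongrightarrow> 0) (at_right 0)"
    and lim_inf: "((\<lambda>t. fundf M N t * rearr M g t) \<longlongrightarrow> 0) at_top"
    and \<epsilon>: "0 < \<epsilon>"
  shows "\<exists>s \<delta>. 0 < s \<and> 0 < \<delta> \<and> emeasure M {x \<in> space M. ennreal s < g x} < \<infinity> \<and>
    (\<forall>h. (\<forall>x\<in>space M. h x \<le> g x) \<longrightarrow> distf M h (ennreal s) \<le> ennreal \<delta> \<longrightarrow> marc M N h \<le> \<epsilon>)"
proof -
  obtain \<delta> where \<delta>: "0 < \<delta>" and small: "\<And>t. 0 < t \<Longrightarrow> t < \<delta> \<Longrightarrow> fundf M N t * rearr M g t \<le> \<epsilon>"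
    using order_tendstoD(2)[OF lim0 \<epsilon>] unfolding eventually_at_right_field by (auto intro: less_imp_le)
  obtain T0 where large: "\<And>t. T0 \<le> t \<Longrightarrow> fundf M N t * rearr M g t \<le> \<epsilon>"
    using order_tendstoD(2)[OF lim_inf \<epsilon>] unfolding eventually_at_top_linorder by (auto intro: less_imp_le)
  define T where "T = max T0 \<delta>"
  have T: "\<delta> \<le> T" "\<And>t. T \<le> t \<Longrightarrow> fundf M N t * rearr M g t \<le> \<epsilon>"
    using large unfolding T_def by auto
  have "fundf M N T < \<infinity>"
    using T(1) \<delta> by (intro fundf_finite) simp
  then obtain s where s: "0 < s" "fundf M N T * ennreal s \<le> \<epsilon>"
    using ennreal_exists_pos_mult_le \<epsilon> by metis
  have "emeasure M {x \<in> space M. ennreal s < g x} < \<infinity>"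
    using distf_finite_if_tendsto_0_at_top[OF g s(1) lim_inf] unfolding distf_def .
  with s(1) \<delta> show ?thesis
    using marc_le_if_profile_small[OF g _ \<delta> T(1) small T(2) s(2)] by blast
qed

lemma tendsto_0_imp_acpart:
  assumes f: "f \<in> fspace M (marc M N)"
    and lim0: "((\<lambda>t. fundf M N t * rearr M (modf f) t) \<longlongrightarrow> 0) (at_right 0)"
    and lim_inf: "((\<lambda>t. fundf M N t * rearr M (modf f) t) \<longlongrightarrow> 0) at_top"
  shows "f \<in> acpart M (marc M N)"
  unfolding acpart_def
proof (intro CollectI conjI allI impI f)
  fix E :: "nat \<Rightarrow> 'a set"
  assume E: "\<forall>k. E k \<in> sets M" and AE: "AE x in M. (\<lambda>k. indicator (E k) x :: real) \<longlonglongrightarrow> 0"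
  have g: "modf f \<in> borel_measurable M"
    using f unfolding fspace_def by (auto intro: modf_measurable)
  show "(\<lambda>k. marc M N (\<lambda>x. modf f x * indicator (E k) x)) \<longlonglongrightarrow> 0"
  proof (rule ennreal_tendsto_0I[of 1])
    fix e :: real assume "0 < e"
    then have "0 < ennreal e"
      by simp
    then obtain s \<delta> where "0 < \<delta>" and L_fin: "emeasure M {x \<in> space M. ennreal s < modf f x} < \<infinity>"
      and marc_le: "\<forall>h. (\<forall>x\<in>space M. h x \<le> modf f x) \<longrightarrow> distf M h (ennreal s) \<le> ennreal \<delta>
        \<longrightarrow> marc M N h \<le> ennreal e"
      using marc_small_if_level_small[OF g lim0 lim_inf] by blast
    define L where "L = {x \<in> space M. ennreal s < modf f x}"
    have "L \<in> sets M"
      unfolding L_def using g by measurable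
    with L_fin have L: "L \<in> sets M" "emeasure M L < \<infinity>"
      unfolding L_def by simp_all
    have "(\<lambda>k. measure M (L \<inter> E k)) \<longlonglongrightarrow> 0"
      using E by (intro measure_inter_tendsto_0[OF L _ AE]) auto
    from order_tendstoD(2)[OF this \<open>0 < \<delta>\<close>]
    show "eventually (\<lambda>k. marc M N (\<lambda>x. modf f x * indicator (E k) x) \<le> 1 * ennreal e) sequentially"
    proof (rule eventually_mono)
      fix k assume k: "measure M (L \<inter> E k) < \<delta>"
      have "distf M (\<lambda>x. modf f x * indicator (E k) x) (ennreal s) = emeasure M (L \<inter> E k)"
        unfolding distf_def L_def by (intro arg_cong[where f = "emeasure M"]) (auto split: split_indicator)
      also have "\<dots> = ennreal (measure M (L \<inter> E k))"
        using emeasure_mono[of "L \<inter> E k" L M] L by (intro emeasure_eq_ennreal_measure) (auto simp: top_unique)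
      also have "\<dots> \<le> ennreal \<delta>"
        using k by (intro ennreal_leI) simp
      finally have "marc M N (\<lambda>x. modf f x * indicator (E k) x) \<le> ennreal e"
        using marc_le by (simp split: split_indicator)
      then show "marc M N (\<lambda>x. modf f x * indicator (E k) x) \<le> 1 * ennreal e"
        by simp
    qed
  qed simp
qed

section \<open>A function without absolutely continuous quasinorm\<close>

definition fund :: "real \<Rightarrow> real" where
  "fund t = enn2real (fundf M N t)"

lemma fundf_eq_ennreal_fund: "0 \<le> t \<Longrightarrow> fundf M N t = ennreal (fund t)"
  unfolding fund_def using fundf_finite[of t] by simp

lemma fund_pos: "0 < t \<Longrightarrow> 0 < fund t"
  unfolding fund_def using fundf_pos[of t] fundf_finite[of t] by (simp add: enn2real_positive_iff)

lemma fund_mono: "0 \<le> s \<Longrightarrow> s \<le> t \<Longrightarrow> fund s \<le> fund t"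
  unfolding fund_def using fundf_mono[of s t] fundf_finite[of t] by (simp add: enn2real_mono)

lemma fund_double:
  assumes "0 \<le> t"
  shows "fund (2 * t) \<le> 2 * C * fund t"
proof -
  have nonneg: "0 \<le> fund t"
    unfolding fund_def by simp
  have "ennreal (fund (2 * t)) \<le> ennreal (2 * C) * ennreal (fund t)"
    using fundf_double[OF assms] assms by (simp add: fundf_eq_ennreal_fund)
  also have "\<dots> = ennreal (2 * C * fund t)"
    using nonneg concavity_ge_1 by (simp add: ennreal_mult)
  finally show ?thesis
    using nonneg concavity_ge_1 by (simp add: ennreal_le_iff)
qed

context
  fixes G :: "nat \<Rightarrow> 'a set"
  assumes G_sets: "\<And>n. G n \<in> sets M" and G_emeasure: "\<And>n. emeasure M (G n) = 2 ^ n"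
    and G_incseq: "incseq G"
begin

lemma G_emeasure_real: "emeasure M (G n) = ennreal (2 ^ n)"
  using G_emeasure[of n] by (simp add: ennreal_power[symmetric])

text \<open>A step version of \<open>1/\<phi>\<close>: its rearrangement at \<open>2\<^sup>n\<close> lies between \<open>1/\<phi>(2\<^sup>n\<^sup>+\<^sup>1)\<close> and
  \<open>1/\<phi>(2\<^sup>n)\<close>.\<close>

definition recip_fund_step :: "'a \<Rightarrow> ennreal" where
  "recip_fund_step x = (SUP n. ennreal (1 / fund (2 ^ n)) * indicator (G n) x)"

lemma recip_fund_step_measurable: "recip_fund_step \<in> borel_measurable M"
  unfolding recip_fund_step_def using G_sets by measurable

lemma recip_fund_antimono: "m \<le> n \<Longrightarrow> 1 / fund (2 ^ n) \<le> 1 / fund (2 ^ m)"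
  using fund_pos fund_mono[of "2 ^ m" "2 ^ n"] by (simp add: frac_le)

lemma less_recip_fund_step_iff:
  "\<sigma> < recip_fund_step x \<longleftrightarrow> (\<exists>n. x \<in> G n \<and> \<sigma> < ennreal (1 / fund (2 ^ n)))"
  unfolding recip_fund_step_def less_SUP_iff by (auto simp: indicator_def)

lemma recip_fund_step_le: "recip_fund_step x \<le> ennreal (1 / fund 1)"
  unfolding recip_fund_step_def
proof (rule SUP_least)
  fix n
  have "ennreal (1 / fund (2 ^ n)) * indicator (G n) x \<le> ennreal (1 / fund (2 ^ n))"
    by (simp split: split_indicator)
  also have "\<dots> \<le> ennreal (1 / fund 1)"
    using recip_fund_antimono[of 0 n] by (intro ennreal_leI) simp
  finally show "ennreal (1 / fund (2 ^ n)) * indicator (G n) x \<le> ennreal (1 / fund 1)" .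
qed

lemma distf_recip_fund_step:
  "distf M recip_fund_step (ennreal (1 / fund (2 ^ n))) \<le> ennreal (if n = 0 then 0 else 2 ^ (n - 1))"
proof (cases n)
  case 0
  have empty: "{x \<in> space M. ennreal (1 / fund 1) < recip_fund_step x} = {}"
    using recip_fund_step_le leD by blast
  show ?thesis
    unfolding distf_def 0 power_0 empty by simp
next
  case (Suc k)
  have "{x \<in> space M. ennreal (1 / fund (2 ^ n)) < recip_fund_step x} \<subseteq> G k"
  proof safe
    fix x assume "ennreal (1 / fund (2 ^ n)) < recip_fund_step x"
    then obtain m where m: "x \<in> G m" "ennreal (1 / fund (2 ^ n)) < ennreal (1 / fund (2 ^ m))"
      unfolding less_recip_fund_step_iff by blast
    have "m < n"
      using m(2) recip_fund_antimono[of n m] by (metis ennreal_leI leD not_le_imp_less)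
    with Suc have "m \<le> k"
      by simp
    with m(1) show "x \<in> G k"
      using incseqD[OF G_incseq] by blast
  qed
  then have "distf M recip_fund_step (ennreal (1 / fund (2 ^ n))) \<le> emeasure M (G k)"
    unfolding distf_def using G_sets by (intro emeasure_mono) auto
  with Suc show ?thesis
    by (simp add: G_emeasure_real)
qed

lemma fundf_mult_rearr_recip_fund_step_le_1:
  assumes "0 \<le> t"
  shows "fundf M N t * rearr M recip_fund_step t \<le> 1"
proof -
  have bound: "fundf M N t * rearr M recip_fund_step t \<le> 1"
    if t: "0 \<le> t" "t \<le> 2 ^ m" and level: "distf M recip_fund_step (ennreal (1 / fund (2 ^ m))) \<le> ennreal t"
    for t m
  proof -
    have "fundf M N t * rearr M recip_fund_step t \<le> ennreal (fund (2 ^ m)) * ennreal (1 / fund (2 ^ m))"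
      using t by (intro mult_mono rearr_leI[OF level]) (auto simp: fundf_eq_ennreal_fund fund_mono ennreal_leI)
    also have "\<dots> = 1"
      using fund_pos[of "2 ^ m"] by (simp add: ennreal_mult[symmetric])
    finally show ?thesis .
  qed
  have "\<forall>t. 0 \<le> t \<longrightarrow> t \<le> 2 ^ n \<longrightarrow> fundf M N t * rearr M recip_fund_step t \<le> 1" for n
  proof (induction n)
    case 0
    show ?case
      using distf_recip_fund_step[of 0] by (intro allI impI bound[of _ 0]) auto
  next
    case (Suc n)
    have "fundf M N t * rearr M recip_fund_step t \<le> 1" if "2 ^ n < t" "t \<le> 2 ^ Suc n" for t
    proof (rule bound[of t "Suc n"])
      have "distf M recip_fund_step (ennreal (1 / fund (2 ^ Suc n))) \<le> ennreal (2 ^ n)"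
        using distf_recip_fund_step[of "Suc n"] by simp
      also have "\<dots> \<le> ennreal t"
        using that by (intro ennreal_leI) simp
      finally show "distf M recip_fund_step (ennreal (1 / fund (2 ^ Suc n))) \<le> ennreal t" .
    qed (use that in auto)
    then show ?case
      using Suc.IH by (meson not_le)
  qed
  moreover obtain n where "t < 2 ^ n"
    using real_arch_pow[of 2 t] by auto
  ultimately show ?thesis
    using assms less_imp_le by blast
qed

lemma fundf_mult_rearr_recip_fund_step_ge:
  "ennreal (1 / (2 * C)) \<le> fundf M N (2 ^ n) * rearr M recip_fund_step (2 ^ n)"
proof -
  have "ennreal (1 / fund (2 ^ Suc n)) \<le> rearr M recip_fund_step (2 ^ n)"
  proof (rule rearr_geI)
    fix \<sigma> assume "\<sigma> < ennreal (1 / fund (2 ^ Suc n))"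
    then have "G (Suc n) \<subseteq> {x \<in> space M. \<sigma> < recip_fund_step x}"
      using sets.sets_into_space[OF G_sets] less_recip_fund_step_iff by blast
    then have "emeasure M (G (Suc n)) \<le> distf M recip_fund_step \<sigma>"
      unfolding distf_def using recip_fund_step_measurable by (intro emeasure_mono) measurable
    moreover have "ennreal (2 ^ n) < ennreal (2 ^ Suc n)"
      by (intro ennreal_lessI) auto
    ultimately show "ennreal (2 ^ n) < distf M recip_fund_step \<sigma>"
      unfolding G_emeasure_real by simp
  qed
  then have "fundf M N (2 ^ n) * ennreal (1 / fund (2 ^ Suc n))
      \<le> fundf M N (2 ^ n) * rearr M recip_fund_step (2 ^ n)"
    by (rule mult_left_mono) simp
  moreover have "fundf M N (2 ^ n) * ennreal (1 / fund (2 ^ Suc n))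
      = ennreal (fund (2 ^ n) * (1 / fund (2 ^ Suc n)))"
    using fund_pos[of "2 ^ n"] fund_pos[of "2 ^ Suc n"] by (simp add: fundf_eq_ennreal_fund ennreal_mult[symmetric])
  ultimately have "ennreal (fund (2 ^ n) * (1 / fund (2 ^ Suc n)))
      \<le> fundf M N (2 ^ n) * rearr M recip_fund_step (2 ^ n)"
    by simp
  moreover have "1 / (2 * C) \<le> fund (2 ^ n) * (1 / fund (2 ^ Suc n))"
    using fund_double[of "2 ^ n"] fund_pos[of "2 ^ n"] fund_pos[of "2 ^ Suc n"] concavity_ge_1
    by (simp add: field_simps)
  ultimately show ?thesis
    by (meson ennreal_leI order_trans)
qed

end

lemma exists_fspace_not_tendsto_0_at_top:
  "\<exists>f\<in>fspace M (marc M N). \<not> ((\<lambda>t. fundf M N t * rearr M (modf f) t) \<longlongrightarrow> 0) at_top"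
proof -
  obtain G where G: "\<And>n. G n \<in> sets M" "\<And>n. emeasure M (G n) = 2 ^ n" "incseq G"
    using nonatomic_incseq_emeasure_pow2[OF sigma_finite nonatomic infinite_space] by metis
  define w where "w = recip_fund_step G"
  define f where "f x = complex_of_real (enn2real (w x))" for x
  have w: "w \<in> borel_measurable M"
    unfolding w_def by (rule recip_fund_step_measurable[OF G])
  have "w x < \<infinity>" for x
    unfolding w_def using recip_fund_step_le[OF G, of x] by (simp add: le_less_trans)
  then have modf: "modf f = w"
    unfolding modf_def f_def by (auto simp: less_top)
  have "marc M N w \<le> 1"
    unfolding w_def by (intro marc_leI fundf_mult_rearr_recip_fund_step_le_1[OF G])
  then have "marc M N (modf f) < \<infinity>"
    unfolding modf by (metis ennreal_1 ennreal_less_top infinity_ennreal_def le_less_trans)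
  moreover have "f \<in> borel_measurable M"
    unfolding f_def using w by measurable
  ultimately have "f \<in> fspace M (marc M N)"
    unfolding fspace_def by simp
  moreover have "\<not> ((\<lambda>t. fundf M N t * rearr M (modf f) t) \<longlongrightarrow> 0) at_top"
  proof
    assume lim: "((\<lambda>t. fundf M N t * rearr M (modf f) t) \<longlongrightarrow> 0) at_top"
    have "0 < ennreal (1 / (2 * C))"
      using concavity_ge_1 by simp
    from order_tendstoD(2)[OF lim[unfolded modf] this]
    obtain T where T: "\<And>t. T \<le> t \<Longrightarrow> fundf M N t * rearr M w t < ennreal (1 / (2 * C))"
      unfolding eventually_at_top_linorder by blast
    obtain n where "T < 2 ^ n"
      using real_arch_pow[of 2 T] by auto
    with T[of "2 ^ n"] fundf_mult_rearr_recip_fund_step_ge[OF G, of n] show False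
      unfolding w_def by simp
  qed
  ultimately show ?thesis
    by blast
qed

lemma acpart_marc_eq:
  "acpart M (marc M N) = {f \<in> fspace M (marc M N).
     ((\<lambda>t. fundf M N t * rearr M (modf f) t) \<longlongrightarrow> 0) (at_right 0) \<and>
     ((\<lambda>t. fundf M N t * rearr M (modf f) t) \<longlongrightarrow> 0) at_top}"
proof (intro equalityI subsetI)
  fix f assume f: "f \<in> acpart M (marc M N)"
  then have "f \<in> fspace M (marc M N)"
    unfolding acpart_def by blast
  with acpart_tendsto_0_at_right[OF f] acpart_tendsto_0_at_top[OF f]
  show "f \<in> {f \<in> fspace M (marc M N).
      ((\<lambda>t. fundf M N t * rearr M (modf f) t) \<longlongrightarrow> 0) (at_right 0) \<and>
      ((\<lambda>t. fundf M N t * rearr M (modf f) t) \<longlongrightarrow> 0) at_top}"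
    by blast
qed (use tendsto_0_imp_acpart in blast)

lemma acpart_marc_ne_fspace: "acpart M (marc M N) \<noteq> fspace M (marc M N)"
  using exists_fspace_not_tendsto_0_at_top acpart_tendsto_0_at_top by blast

end

lemma ri_quasinorm_if_qbfn:
  assumes "sigma_finite_measure M" "nonatomic M" "emeasure M (space M) = \<infinity>" "qbfn M N" "rinv M N"
  obtains C where "ri_quasinorm M N C"
proof -
  note q = assms(4)[unfolded qbfn_def]
  obtain C where C: "1 \<le> C" and tri: "\<forall>f\<in>borel_measurable M. \<forall>g\<in>borel_measurable M.
      N (\<lambda>x. f x + g x) \<le> ennreal C * (N f + N g)"
    using q[THEN conjunct2, THEN conjunct2, THEN conjunct1] by blast
  have "ri_quasinorm M N C"
  proof (rule ri_quasinorm.intro)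
    show "1 \<le> C"
      by (fact C)
    show "N (\<lambda>x. f x + g x) \<le> ennreal C * (N f + N g)"
      if "f \<in> borel_measurable M" "g \<in> borel_measurable M" for f g
      using tri that by blast
    show "N f = 0 \<longleftrightarrow> (AE x in M. f x = 0)" if "f \<in> borel_measurable M" for f
      using q[THEN conjunct2, THEN conjunct1] that by blast
    show "N f \<le> N g"
      if "f \<in> borel_measurable M" "g \<in> borel_measurable M" "AE x in M. f x \<le> g x" for f g
      using q[THEN conjunct2, THEN conjunct2, THEN conjunct2, THEN conjunct1] that by blast
    show "N (indicator E) < \<infinity>" if "E \<in> sets M" "emeasure M E < \<infinity>" for E
      using q[THEN conjunct2, THEN conjunct2, THEN conjunct2, THEN conjunct2, THEN conjunct2] that by blast
  qed (fact assms)+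
  then show ?thesis
    by (rule that)
qed

theorem mainTheorem12:
  fixes M :: "'a measure" and N :: "('a \<Rightarrow> ennreal) \<Rightarrow> ennreal"
  assumes "sigma_finite_measure M"
    and "nonatomic M"
    and "emeasure M (space M) = \<infinity>"
    and "qbfn M N" and "rinv M N"
  shows "acpart M (marc M N) =
           {f \<in> fspace M (marc M N).
              ((\<lambda>t. fundf M N t * rearr M (modf f) t) \<longlongrightarrow> 0) (at_right 0) \<and>
              ((\<lambda>t. fundf M N t * rearr M (modf f) t) \<longlongrightarrow> 0) at_top}
       \<and> acpart M (marc M N) \<noteq> fspace M (marc M N)"
proof -
  obtain C where "ri_quasinorm M N C"
    using ri_quasinorm_if_qbfn[OF assms] by blast
  then interpret ri_quasinorm M N C .
  show ?thesis
    using acpart_marc_eq acpart_marc_ne_fspace by blast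
qed

end
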